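(* Let $(x_n,v_n)\subset GR$ and assume $(x_n,v_n)\to(x_0,v_0)$ in $TE^N=E^N\times E^N$. Then $x_0\in\Omega$.
   Context: $E=\mathbb R^d$, $d\ge2$; $N$ bodies with masses $m_i>0$; mass inner product $\langle x,y\rangle=\sum_i m_i(x_i,y_i)$ on $E^N$ with norm $\|\cdot\|$; $U(x)=\sum_{i<j}\frac{m_im_j}{|x_i-x_j|}$; $\Omega=\{x\in E^N: x_i\ne x_j,\ i\ne j\}$; Newton's equation $\ddot x=\nabla U(x)$; $T\Omega\simeq\Omega\times E^N$. $L(x,v)=\frac12\|v\|^2+U(x)$, $A_h(\gamma)=\int(L(\gamma,\dot\gamma)+h)dt$, $\phi_h(x,y)$ the infimum of $A_h$ over absolutely continuous curves from $x$ to $y$ on compact intervals. A geodesic ray of energy $h\ge0$ is a curve $\gamma:[0,\infty)\to\Omega$ with $A_h(\gamma|_{[s,t]})=\phi_h(\gamma(s),\gamma(t))$ for all $0\le s<t$ (equivalently, after reparametrization, a ray minimizing for the Jacobi–Maupertuis metric $2(h+U)\langle\cdot,\cdot\rangle$). $GR$ is the set of $(x,v)\in T\Omega$ such that the maximal classical solution of Newton's equation with initial datum $(x,v)$ is a geodesic ray; the energy of the datum is $\frac12\|v\|^2-U(x)$. *)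

theory Defs
  imports "HOL-Analysis.Analysis"
begin

text \<open>Configurations of N bodies in E = R^d: elements of (real^'d)^'n, where the
  finite type 'n indexes the bodies and 'd the coordinates.  Masses: m :: 'n => real.\<close>

definition mass_inner :: "('n::finite \<Rightarrow> real) \<Rightarrow> (real^'d)^'n \<Rightarrow> (real^'d)^'n \<Rightarrow> real" where
  "mass_inner m x y = (\<Sum>i\<in>UNIV. m i * ((x $ i) \<bullet> (y $ i)))"

definition mass_norm2 :: "('n::finite \<Rightarrow> real) \<Rightarrow> (real^'d)^'n \<Rightarrow> real" where
  "mass_norm2 m v = mass_inner m v v"

text \<open>Newtonian potential U(x) = sum over i<j of m_i m_j / |x_i - x_j|
  (sum over unordered pairs of distinct bodies).\<close>
definition potential :: "('n::finite \<Rightarrow> real) \<Rightarrow> (real^'d)^'n \<Rightarrow> real" where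
  "potential m x = (\<Sum>p\<in>{(i,j). i \<noteq> j}. m (fst p) * m (snd p) / norm (x $ fst p - x $ snd p)) / 2"

definition Omega :: "((real^'d)^'n::finite) set" where
  "Omega = {x. \<forall>i j. i \<noteq> j \<longrightarrow> x $ i \<noteq> x $ j}"

definition potential_ext :: "('n::finite \<Rightarrow> real) \<Rightarrow> (real^'d)^'n \<Rightarrow> ennreal" where
  "potential_ext m x = (if x \<in> Omega then ennreal (potential m x) else \<infinity>)"

definition abs_cont_on :: "real \<Rightarrow> real \<Rightarrow> (real \<Rightarrow> 'a::real_normed_vector) \<Rightarrow> bool" where
  "abs_cont_on a b \<gamma> \<longleftrightarrow>
     (\<forall>\<epsilon>>0. \<exists>\<delta>>0. \<forall>(n::nat) (s::nat\<Rightarrow>real) t.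
        (\<forall>i<n. a \<le> s i \<and> s i \<le> t i \<and> t i \<le> b) \<and>
        (\<forall>i<n. \<forall>j<n. i \<noteq> j \<longrightarrow> t i \<le> s j \<or> t j \<le> s i) \<and>
        (\<Sum>i<n. t i - s i) < \<delta> \<longrightarrow>
        (\<Sum>i<n. norm (\<gamma> (t i) - \<gamma> (s i))) < \<epsilon>)"

definition action :: "('n::finite \<Rightarrow> real) \<Rightarrow> real \<Rightarrow> real \<Rightarrow> real \<Rightarrow> (real \<Rightarrow> (real^'d)^'n) \<Rightarrow> ennreal" where
  "action m h a b \<gamma> =
     (\<integral>\<^sup>+ t\<in>{a..b}. ennreal (mass_norm2 m (vector_derivative \<gamma> (at t within {a..b})) / 2 + h)
                     + potential_ext m (\<gamma> t) \<partial>lborel)"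

definition phi :: "('n::finite \<Rightarrow> real) \<Rightarrow> real \<Rightarrow> (real^'d)^'n \<Rightarrow> (real^'d)^'n \<Rightarrow> ennreal" where
  "phi m h x y = (INF c \<in> {(a, b, \<gamma>). a \<le> b \<and> abs_cont_on a b \<gamma> \<and> \<gamma> a = x \<and> \<gamma> b = y}.
                    (case c of (a, b, \<gamma>) \<Rightarrow> action m h a b \<gamma>))"

definition geodesic_ray :: "('n::finite \<Rightarrow> real) \<Rightarrow> real \<Rightarrow> (real \<Rightarrow> (real^'d)^'n) \<Rightarrow> bool" where
  "geodesic_ray m h \<gamma> \<longleftrightarrow> 0 \<le> h \<and> (\<forall>t\<ge>0. \<gamma> t \<in> Omega) \<and>
     (\<forall>s t. 0 \<le> s \<and> s < t \<longrightarrow>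
        abs_cont_on s t \<gamma> \<and> action m h s t \<gamma> = phi m h (\<gamma> s) (\<gamma> t))"

definition energy :: "('n::finite \<Rightarrow> real) \<Rightarrow> (real^'d)^'n \<Rightarrow> (real^'d)^'n \<Rightarrow> real" where
  "energy m x v = mass_norm2 m v / 2 - potential m x"

text \<open>Classical forward solution of Newton's equation xdd = grad U(x) on [0,oo), staying in
  Omega, where grad is taken w.r.t. the mass inner product:
  DU(x) y = <grad U(x), y> for all y.\<close>
definition newton_solution_fwd :: "('n::finite \<Rightarrow> real) \<Rightarrow> (real \<Rightarrow> (real^'d)^'n) \<Rightarrow> bool" where
  "newton_solution_fwd m \<gamma> \<longleftrightarrow> (\<exists>\<gamma>' \<gamma>''.
     \<forall>t\<ge>0. \<gamma> t \<in> Omega \<and>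
       (\<gamma> has_vector_derivative \<gamma>' t) (at t within {0..}) \<and>
       (\<gamma>' has_vector_derivative \<gamma>'' t) (at t within {0..}) \<and>
       (potential m has_derivative (\<lambda>y. mass_inner m (\<gamma>'' t) y)) (at (\<gamma> t)))"

text \<open>GR: initial data (x,v) in T Omega whose (maximal) solution of Newton's equation is a
  geodesic ray of energy 1/2|v|^2 - U(x).  By uniqueness of solutions this is equivalent to the
  existence of a forward solution on [0,oo) with this datum that is a geodesic ray.\<close>
definition GR :: "('n::finite \<Rightarrow> real) \<Rightarrow> (((real^'d)^'n) \<times> ((real^'d)^'n)) set" where
  "GR m = {(x, v). x \<in> Omega \<and> (\<exists>\<gamma>. newton_solution_fwd m \<gamma> \<and> \<gamma> 0 = x \<and>
       (\<gamma> has_vector_derivative v) (at 0 within {0..}) \<and>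
       geodesic_ray m (energy m x v) \<gamma>)}"

end

theory Submission
  imports Defs
begin

text \<open>A datum in GR has nonnegative energy, so U(x) is bounded by the kinetic energy
  |v|^2/2, which stays bounded along a convergent sequence of data.  But U, bounded below by
  the contribution of any single pair of bodies, blows up as a configuration approaches a
  collision.\<close>

lemma potential_ge_pair_term:
  fixes m :: "'n::finite \<Rightarrow> real" and x :: "(real^'d)^'n"
  assumes "\<And>a. m a > 0" and "i \<noteq> j"
  shows "m i * m j / norm (x $ i - x $ j) / 2 \<le> potential m x"
proof -
  let ?term = "\<lambda>p. m (fst p) * m (snd p) / norm (x $ fst p - x $ snd p)"
  have "0 \<le> ?term p" for p
    using assms(1)[of "fst p"] assms(1)[of "snd p"] by simp
  then have "?term (i, j) \<le> (\<Sum>p\<in>{(a, b). a \<noteq> b}. ?term p)"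
    by (intro member_le_sum) (use assms(2) in auto)
  then show ?thesis
    unfolding potential_def by simp
qed

lemma potential_le_kinetic_if_GR:
  fixes x v :: "(real^'d)^'n::finite"
  assumes "(x, v) \<in> GR m"
  shows "potential m x \<le> mass_norm2 m v / 2"
proof -
  from assms have "\<exists>\<gamma> :: real \<Rightarrow> (real^'d)^'n. geodesic_ray m (energy m x v) \<gamma>"
    unfolding GR_def by auto
  then have "0 \<le> energy m x v"
    unfolding geodesic_ray_def by auto
  then show ?thesis
    unfolding energy_def by simp
qed

lemma tendsto_mass_norm2:
  fixes m :: "'n::finite \<Rightarrow> real" and f :: "'a \<Rightarrow> (real^'d)^'n"
  assumes "(f \<longlongrightarrow> v) F"
  shows "((\<lambda>t. mass_norm2 m (f t)) \<longlongrightarrow> mass_norm2 m v) F"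
  unfolding mass_norm2_def mass_inner_def
  by (intro tendsto_sum tendsto_mult_left tendsto_inner tendsto_vec_nth assms)

lemma potential_tendsto_at_top_at_collision:
  fixes m :: "'n::finite \<Rightarrow> real" and f :: "'a \<Rightarrow> (real^'d)^'n"
  assumes "\<And>a. m a > 0"
    and "(f \<longlongrightarrow> x0) F"
    and "x0 \<notin> Omega"
    and "eventually (\<lambda>t. f t \<in> Omega) F"
  shows "LIM t F. potential m (f t) :> at_top"
proof -
  obtain i j where "i \<noteq> j" and collision: "x0 $ i = x0 $ j"
    using assms(3) unfolding Omega_def by auto
  define dist_ij where "dist_ij t = norm (f t $ i - f t $ j)" for t
  have "(dist_ij \<longlongrightarrow> norm (x0 $ i - x0 $ j)) F"
    unfolding dist_ij_def by (intro tendsto_intros assms(2))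
  then have "(dist_ij \<longlongrightarrow> 0) F"
    using collision by simp
  moreover have "eventually (\<lambda>t. 0 < dist_ij t) F"
    using assms(4) by eventually_elim (use \<open>i \<noteq> j\<close> in \<open>auto simp: dist_ij_def Omega_def\<close>)
  ultimately have "LIM t F. inverse (dist_ij t) :> at_top"
    by (rule filterlim_inverse_at_top)
  then have "LIM t F. m i * m j / 2 * inverse (dist_ij t) :> at_top"
    using assms(1)[of i] assms(1)[of j]
    by (intro filterlim_tendsto_pos_mult_at_top[OF tendsto_const]) simp_all
  moreover have "\<forall>t. m i * m j / 2 * inverse (dist_ij t) \<le> potential m (f t)"
  proof
    fix t
    have "m i * m j / 2 * inverse (dist_ij t) = m i * m j / dist_ij t / 2"
      by (simp add: inverse_eq_divide)
    also have "\<dots> \<le> potential m (f t)"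
      unfolding dist_ij_def by (rule potential_ge_pair_term[OF assms(1) \<open>i \<noteq> j\<close>])
    finally show "m i * m j / 2 * inverse (dist_ij t) \<le> potential m (f t)" .
  qed
  ultimately show ?thesis
    by (blast intro: filterlim_at_top_mono always_eventually)
qed

theorem lemma3p1:
  fixes m :: "'n::finite \<Rightarrow> real"
    and xs vs :: "nat \<Rightarrow> (real^'d)^'n"
    and x0 v0 :: "(real^'d)^'n"
  assumes "CARD('d) \<ge> 2"
    and "\<And>i. m i > 0"
    and "\<And>k. (xs k, vs k) \<in> GR m"
    and "(\<lambda>k. (xs k, vs k)) \<longlonglongrightarrow> (x0, v0)"
  shows "x0 \<in> Omega"
proof (rule ccontr)
  assume "x0 \<notin> Omega"
  have "xs \<longlonglongrightarrow> x0" and "vs \<longlonglongrightarrow> v0"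
    using tendsto_fst[OF assms(4)] tendsto_snd[OF assms(4)] by simp_all
  have "\<forall>k. xs k \<in> Omega"
    using assms(3) unfolding GR_def by blast
  then have "LIM k sequentially. potential m (xs k) :> at_top"
    using potential_tendsto_at_top_at_collision[OF assms(2) \<open>xs \<longlonglongrightarrow> x0\<close> \<open>x0 \<notin> Omega\<close>] by simp
  then have "LIM k sequentially. mass_norm2 m (vs k) / 2 :> at_top"
    by (rule filterlim_at_top_mono) (intro always_eventually allI potential_le_kinetic_if_GR assms(3))
  moreover have "(\<lambda>k. mass_norm2 m (vs k) / 2) \<longlonglongrightarrow> mass_norm2 m v0 / 2"
    by (intro tendsto_divide tendsto_const tendsto_mass_norm2 \<open>vs \<longlonglongrightarrow> v0\<close>) simp
  ultimately show False
    using not_tendsto_and_filterlim_at_infinity[OF sequentially_bot]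
          filterlim_at_top_imp_at_infinity by blast
qed

end
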